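(* Let $\mathbf t:\mathcal D\to\mathcal T$ be a logical refinement system with enough residuals and pullbacks, and let $W$ be a monoid in $\mathcal T$ with multiplication $p:W\otimes W\to W$. Then the functor $Q\mapsto Q^{+}$ from the fiber $\mathcal D_W$ to $[(W^{+})^{op},\mathbf{Set}]$ preserves residuals: for all $P,Q,R\sqsubset W$ there are natural isomorphisms of presheaves on $W^{+}$ $(P\multimap_WR)^{+}\cong P^{+}\multimap_{W^{+}}R^{+}$ and $(R\mathbin{\circ\!\!-}_WQ)^{+}\cong R^{+}\mathbin{\circ\!\!-}_{W^{+}}Q^{+}$.
   Context: A refinement system is a functor $\mathbf{t}:\mathcal{D}\to\mathcal{T}$; composition is diagrammatic. Write $P\sqsubset A$ if $\mathbf t(P)=A$; a derivation of $P\Rightarrow_cQ$ is a morphism $\alpha:P\to Q$ with $\mathbf t(\alpha)=c$. A pullback of $Q\sqsubset B$ along $c:A\to B$ is $c^*Q\sqsubset A$ with a derivation $\lambda$ of $c^*Q\Rightarrow_cQ$ such that post-composition with $\lambda$ is a bijection from derivations of $P\Rightarrow_dc^*Q$ to derivations of $P\Rightarrow_{d;c}Q$ for all $P\sqsubset X$, $d:X\to A$. A logical refinement system is a strict monoidal functor $\mathbf t$ between monoidal categories such that whenever a left residual $P\backslash R$ (right adjoint of $P\otimes-$ at $R$) or right residual $R/Q$ (right adjoint of $-\otimes Q$ at $R$) exists in $\mathcal D$, $\mathbf t$ maps it, with its evaluation map, to a corresponding residual in $\mathcal T$. "Enough residuals and pullbacks" means that the residuals $P\backslash R$, $R/Q$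 in $\mathcal D$ (for $P,Q,R\sqsubset W$), the residuals $W\backslash W$, $W/W$ in $\mathcal T$, and the pullbacks below exist. Let $\lambda p:W\to W\backslash W$ and $\rho p:W\to W/W$ be the left and right curryings of $p$. The fiber $\mathcal D_W$ (refinements of $W$, derivations over $\mathrm{id}_W$) has residuals $P\multimap_WR:=(\lambda p)^*(P\backslash R)$ and $R\mathbin{\circ\!\!-}_WQ:=(\rho p)^*(R/Q)$. Positive representation: $W^{+}$ has objects $(P,c)$, $P\sqsubset X$, $c:X\to W$, morphisms $(P_1,c_1)\to(P_2,c_2)$ the derivations of $P_1\Rightarrow_eP_2$ with $c_1=e;c_2$; for $Q\sqsubset W$, $Q^{+}:(W^{+})^{op}\to\mathbf{Set}$ sends $(P,c)$ to the set of derivations of $P\Rightarrow_cQ$, acting by precomposition. $W^{+}$ carries the functor $\otimes:W^{+}\times W^{+}\to W^{+}$, $((P_1,c_1),(P_2,c_2))\mapsto(P_1\otimes P_2,(c_1\otimes c_2);p)$. For presheaves $\phi,\psi,\omega$ on $W^{+}$: $(\phi\multimap_{W^{+}}\omega)(y)$ is the set of natural transformations $\phi\Rightarrow\omega((-)\otimes y)$, and $(\omega\mathbin{\circ\!\!-}_{W^{+}}\psi)(x)$ is the set of natural transformations $\psi\Rightarrow\omega(x\otimes(-))$. *)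

theory Defs
  imports Main
begin

section \<open>Monoidal categories (not necessarily strict), diagrammatic composition\<close>

record ('o,'m) mcat =
  Ob  :: "'o set"
  Ar  :: "'m set"
  src :: "'m \<Rightarrow> 'o"
  tgt :: "'m \<Rightarrow> 'o"
  idm :: "'o \<Rightarrow> 'm"
  cmp :: "'m \<Rightarrow> 'm \<Rightarrow> 'm"        (* cmp C f g = f ; g  (first f, then g) *)
  tob :: "'o \<Rightarrow> 'o \<Rightarrow> 'o"        (* tensor on objects *)
  tar :: "'m \<Rightarrow> 'm \<Rightarrow> 'm"        (* tensor on morphisms *)
  unt :: "'o"                      (* monoidal unit *)
  asc :: "'o \<Rightarrow> 'o \<Rightarrow> 'o \<Rightarrow> 'm"  (* associator (A*B)*C -> A*(B*C) *)
  lun :: "'o \<Rightarrow> 'm"               (* left unitor  I*A -> A *)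
  run :: "'o \<Rightarrow> 'm"               (* right unitor A*I -> A *)

definition hom :: "('o,'m) mcat \<Rightarrow> 'o \<Rightarrow> 'o \<Rightarrow> 'm set" where
  "hom C A B = {f \<in> Ar C. src C f = A \<and> tgt C f = B}"

definition is_category :: "('o,'m) mcat \<Rightarrow> bool" where
  "is_category C \<longleftrightarrow>
     (\<forall>f\<in>Ar C. src C f \<in> Ob C \<and> tgt C f \<in> Ob C) \<and>
     (\<forall>A\<in>Ob C. idm C A \<in> hom C A A) \<and>
     (\<forall>f\<in>Ar C. \<forall>g\<in>Ar C. tgt C f = src C g \<longrightarrow> cmp C f g \<in> hom C (src C f) (tgt C g)) \<and>
     (\<forall>f\<in>Ar C. cmp C (idm C (src C f)) f = f \<and> cmp C f (idm C (tgt C f)) = f) \<and>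
     (\<forall>f\<in>Ar C. \<forall>g\<in>Ar C. \<forall>h\<in>Ar C. tgt C f = src C g \<and> tgt C g = src C h \<longrightarrow>
        cmp C (cmp C f g) h = cmp C f (cmp C g h))"

definition is_iso :: "('o,'m) mcat \<Rightarrow> 'm \<Rightarrow> bool" where
  "is_iso C f \<longleftrightarrow> f \<in> Ar C \<and> (\<exists>g\<in>hom C (tgt C f) (src C f).
      cmp C f g = idm C (src C f) \<and> cmp C g f = idm C (tgt C f))"

definition is_monoidal_category :: "('o,'m) mcat \<Rightarrow> bool" where
  "is_monoidal_category C \<longleftrightarrow> is_category C \<and>
     unt C \<in> Ob C \<and>
     (\<forall>A\<in>Ob C. \<forall>B\<in>Ob C. tob C A B \<in> Ob C) \<and>
     (\<forall>f\<in>Ar C. \<forall>g\<in>Ar C. tar C f g \<in> hom C (tob C (src C f) (src C g)) (tob C (tgt C f) (tgt C g))) \<and>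
     (\<forall>A\<in>Ob C. \<forall>B\<in>Ob C. tar C (idm C A) (idm C B) = idm C (tob C A B)) \<and>
     (\<forall>f\<in>Ar C. \<forall>f'\<in>Ar C. \<forall>g\<in>Ar C. \<forall>g'\<in>Ar C. tgt C f = src C f' \<and> tgt C g = src C g' \<longrightarrow>
        tar C (cmp C f f') (cmp C g g') = cmp C (tar C f g) (tar C f' g')) \<and>
     (\<forall>A\<in>Ob C. \<forall>B\<in>Ob C. \<forall>D\<in>Ob C.
        asc C A B D \<in> hom C (tob C (tob C A B) D) (tob C A (tob C B D)) \<and> is_iso C (asc C A B D)) \<and>
     (\<forall>A\<in>Ob C. lun C A \<in> hom C (tob C (unt C) A) A \<and> is_iso C (lun C A)) \<and>
     (\<forall>A\<in>Ob C. run C A \<in> hom C (tob C A (unt C)) A \<and> is_iso C (run C A)) \<and>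
     (\<forall>f\<in>Ar C. \<forall>g\<in>Ar C. \<forall>h\<in>Ar C.
        cmp C (tar C (tar C f g) h) (asc C (tgt C f) (tgt C g) (tgt C h)) =
        cmp C (asc C (src C f) (src C g) (src C h)) (tar C f (tar C g h))) \<and>
     (\<forall>f\<in>Ar C. cmp C (tar C (idm C (unt C)) f) (lun C (tgt C f)) = cmp C (lun C (src C f)) f) \<and>
     (\<forall>f\<in>Ar C. cmp C (tar C f (idm C (unt C))) (run C (tgt C f)) = cmp C (run C (src C f)) f) \<and>
     (\<forall>A\<in>Ob C. \<forall>B\<in>Ob C. \<forall>D\<in>Ob C. \<forall>E\<in>Ob C.
        cmp C (cmp C (tar C (asc C A B D) (idm C E)) (asc C A (tob C B D) E))
              (tar C (idm C A) (asc C B D E))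
        = cmp C (asc C (tob C A B) D E) (asc C A B (tob C D E))) \<and>
     (\<forall>A\<in>Ob C. \<forall>B\<in>Ob C.
        cmp C (asc C A (unt C) B) (tar C (idm C A) (lun C B)) = tar C (run C A) (idm C B))"

definition strict_monoidal_functor ::
  "('a,'b) mcat \<Rightarrow> ('c,'d) mcat \<Rightarrow> ('a \<Rightarrow> 'c) \<Rightarrow> ('b \<Rightarrow> 'd) \<Rightarrow> bool" where
  "strict_monoidal_functor D T to tm \<longleftrightarrow>
     (\<forall>A\<in>Ob D. to A \<in> Ob T) \<and>
     (\<forall>f\<in>Ar D. tm f \<in> hom T (to (src D f)) (to (tgt D f))) \<and>
     (\<forall>A\<in>Ob D. tm (idm D A) = idm T (to A)) \<and>
     (\<forall>f\<in>Ar D. \<forall>g\<in>Ar D. tgt D f = src D g \<longrightarrow> tm (cmp D f g) = cmp T (tm f) (tm g)) \<and>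
     to (unt D) = unt T \<and>
     (\<forall>A\<in>Ob D. \<forall>B\<in>Ob D. to (tob D A B) = tob T (to A) (to B)) \<and>
     (\<forall>f\<in>Ar D. \<forall>g\<in>Ar D. tm (tar D f g) = tar T (tm f) (tm g)) \<and>
     (\<forall>A\<in>Ob D. \<forall>B\<in>Ob D. \<forall>E\<in>Ob D. tm (asc D A B E) = asc T (to A) (to B) (to E)) \<and>
     (\<forall>A\<in>Ob D. tm (lun D A) = lun T (to A) \<and> tm (run D A) = run T (to A))"

definition is_left_res :: "('o,'m) mcat \<Rightarrow> 'o \<Rightarrow> 'o \<Rightarrow> 'o \<Rightarrow> 'm \<Rightarrow> bool" where
  "is_left_res C P R X ev \<longleftrightarrow> P \<in> Ob C \<and> R \<in> Ob C \<and> X \<in> Ob C \<and>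
     ev \<in> hom C (tob C P X) R \<and>
     (\<forall>Y\<in>Ob C. \<forall>f\<in>hom C (tob C P Y) R.
        \<exists>!g. g \<in> hom C Y X \<and> f = cmp C (tar C (idm C P) g) ev)"

definition is_right_res :: "('o,'m) mcat \<Rightarrow> 'o \<Rightarrow> 'o \<Rightarrow> 'o \<Rightarrow> 'm \<Rightarrow> bool" where
  "is_right_res C R Q X ev \<longleftrightarrow> R \<in> Ob C \<and> Q \<in> Ob C \<and> X \<in> Ob C \<and>
     ev \<in> hom C (tob C X Q) R \<and>
     (\<forall>Y\<in>Ob C. \<forall>f\<in>hom C (tob C Y Q) R.
        \<exists>!g. g \<in> hom C Y X \<and> f = cmp C (tar C g (idm C Q)) ev)"

definition logical_refinement_system ::
  "('a,'b) mcat \<Rightarrow> ('c,'d) mcat \<Rightarrow> ('a \<Rightarrow> 'c) \<Rightarrow> ('b \<Rightarrow> 'd) \<Rightarrow> bool" where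
  "logical_refinement_system D T to tm \<longleftrightarrow>
     is_monoidal_category D \<and> is_monoidal_category T \<and> strict_monoidal_functor D T to tm \<and>
     (\<forall>P R X ev. is_left_res D P R X ev \<longrightarrow> is_left_res T (to P) (to R) (to X) (tm ev)) \<and>
     (\<forall>R Q X ev. is_right_res D R Q X ev \<longrightarrow> is_right_res T (to R) (to Q) (to X) (tm ev))"

definition refines :: "('a,'b) mcat \<Rightarrow> ('a \<Rightarrow> 'c) \<Rightarrow> 'a \<Rightarrow> 'c \<Rightarrow> bool" where
  "refines D to P A \<longleftrightarrow> P \<in> Ob D \<and> to P = A"

definition derivs :: "('a,'b) mcat \<Rightarrow> ('b \<Rightarrow> 'd) \<Rightarrow> 'a \<Rightarrow> 'd \<Rightarrow> 'a \<Rightarrow> 'b set" where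
  "derivs D tm P c Q = {\<alpha> \<in> hom D P Q. tm \<alpha> = c}"

definition is_pullback ::
  "('a,'b) mcat \<Rightarrow> ('c,'d) mcat \<Rightarrow> ('a \<Rightarrow> 'c) \<Rightarrow> ('b \<Rightarrow> 'd) \<Rightarrow> 'd \<Rightarrow> 'a \<Rightarrow> 'a \<Rightarrow> 'b \<Rightarrow> bool" where
  "is_pullback D T to tm c Q Y lam \<longleftrightarrow>
     c \<in> Ar T \<and> refines D to Q (tgt T c) \<and> refines D to Y (src T c) \<and>
     lam \<in> derivs D tm Y c Q \<and>
     (\<forall>P\<in>Ob D. \<forall>d\<in>hom T (to P) (src T c).
        bij_betw (\<lambda>\<alpha>. cmp D \<alpha> lam) (derivs D tm P d Y) (derivs D tm P (cmp T d c) Q))"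

definition is_monoid :: "('c,'d) mcat \<Rightarrow> 'c \<Rightarrow> 'd \<Rightarrow> 'd \<Rightarrow> bool" where
  "is_monoid T W p e \<longleftrightarrow> W \<in> Ob T \<and> p \<in> hom T (tob T W W) W \<and> e \<in> hom T (unt T) W \<and>
     cmp T (tar T p (idm T W)) p = cmp T (asc T W W W) (cmp T (tar T (idm T W) p) p) \<and>
     cmp T (tar T e (idm T W)) p = lun T W \<and>
     cmp T (tar T (idm T W) e) p = run T W"

text \<open>Left currying: lp : W -> X with p = (id_W * lp) ; ev, for X = P\R with evaluation ev
  (after transport along t). Right currying analogous.\<close>
definition left_curry :: "('c,'d) mcat \<Rightarrow> 'c \<Rightarrow> 'd \<Rightarrow> 'c \<Rightarrow> 'd \<Rightarrow> 'd \<Rightarrow> bool" where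
  "left_curry T W p X ev lp \<longleftrightarrow> lp \<in> hom T W X \<and> p = cmp T (tar T (idm T W) lp) ev"

definition right_curry :: "('c,'d) mcat \<Rightarrow> 'c \<Rightarrow> 'd \<Rightarrow> 'c \<Rightarrow> 'd \<Rightarrow> 'd \<Rightarrow> bool" where
  "right_curry T W p X ev rp \<longleftrightarrow> rp \<in> hom T W X \<and> p = cmp T (tar T rp (idm T W)) ev"

definition enough_res_pb ::
  "('a,'b) mcat \<Rightarrow> ('c,'d) mcat \<Rightarrow> ('a \<Rightarrow> 'c) \<Rightarrow> ('b \<Rightarrow> 'd) \<Rightarrow> 'c \<Rightarrow> 'd \<Rightarrow> bool" where
  "enough_res_pb D T to tm W p \<longleftrightarrow>
     (\<forall>P R. refines D to P W \<and> refines D to R W \<longrightarrow> (\<exists>X ev. is_left_res D P R X ev)) \<and>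
     (\<forall>R Q. refines D to R W \<and> refines D to Q W \<longrightarrow> (\<exists>X ev. is_right_res D R Q X ev)) \<and>
     (\<exists>X ev. is_left_res T W W X ev) \<and>
     (\<exists>X ev. is_right_res T W W X ev) \<and>
     (\<forall>P R X ev lp. refines D to P W \<and> refines D to R W \<and> is_left_res D P R X ev \<and>
         left_curry T W p (to X) (tm ev) lp \<longrightarrow> (\<exists>Y lam. is_pullback D T to tm lp X Y lam)) \<and>
     (\<forall>R Q X ev rp. refines D to R W \<and> refines D to Q W \<and> is_right_res D R Q X ev \<and>
         right_curry T W p (to X) (tm ev) rp \<longrightarrow> (\<exists>Y lam. is_pullback D T to tm rp X Y lam))"

section \<open>Positive representation W^+\<close>

definition wplus_ob :: "('a,'b) mcat \<Rightarrow> ('c,'d) mcat \<Rightarrow> ('a \<Rightarrow> 'c) \<Rightarrow> 'c \<Rightarrow> ('a \<times> 'd) set" where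
  "wplus_ob D T to W = {(P, c). P \<in> Ob D \<and> c \<in> hom T (to P) W}"

definition wplus_hom ::
  "('a,'b) mcat \<Rightarrow> ('c,'d) mcat \<Rightarrow> ('b \<Rightarrow> 'd) \<Rightarrow> ('a \<times> 'd) \<Rightarrow> ('a \<times> 'd) \<Rightarrow> 'b set" where
  "wplus_hom D T tm x y = {\<alpha> \<in> hom D (fst x) (fst y). snd x = cmp T (tm \<alpha>) (snd y)}"

text \<open>Q^+ (P,c) = derivations of P ==>_c Q; action on morphisms by precomposition (cmp D h a).\<close>
definition plus :: "('a,'b) mcat \<Rightarrow> ('b \<Rightarrow> 'd) \<Rightarrow> 'a \<Rightarrow> ('a \<times> 'd) \<Rightarrow> 'b set" where
  "plus D tm Q x = derivs D tm (fst x) (snd x) Q"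

definition wtens :: "('a,'b) mcat \<Rightarrow> ('c,'d) mcat \<Rightarrow> 'd \<Rightarrow> ('a \<times> 'd) \<Rightarrow> ('a \<times> 'd) \<Rightarrow> ('a \<times> 'd)" where
  "wtens D T p x y = (tob D (fst x) (fst y), cmp T (tar T (snd x) (snd y)) p)"

text \<open>(phi -o omega)(y) for phi = P^+, omega = R^+: natural transformations
  P^+ => R^+((-) * y), represented extensionally.\<close>
definition lres_plus ::
  "('a,'b) mcat \<Rightarrow> ('c,'d) mcat \<Rightarrow> ('a \<Rightarrow> 'c) \<Rightarrow> ('b \<Rightarrow> 'd) \<Rightarrow> 'c \<Rightarrow> 'd \<Rightarrow> 'a \<Rightarrow> 'a
   \<Rightarrow> ('a \<times> 'd) \<Rightarrow> (('a \<times> 'd) \<Rightarrow> 'b \<Rightarrow> 'b) set" where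
  "lres_plus D T to tm W p P R y = {\<theta>.
     (\<forall>x\<in>wplus_ob D T to W. \<forall>a\<in>plus D tm P x. \<theta> x a \<in> plus D tm R (wtens D T p x y)) \<and>
     (\<forall>x\<in>wplus_ob D T to W. \<forall>x'\<in>wplus_ob D T to W. \<forall>h\<in>wplus_hom D T tm x' x. \<forall>a\<in>plus D tm P x.
        \<theta> x' (cmp D h a) = cmp D (tar D h (idm D (fst y))) (\<theta> x a)) \<and>
     (\<forall>x a. \<not> (x \<in> wplus_ob D T to W \<and> a \<in> plus D tm P x) \<longrightarrow> \<theta> x a = undefined)}"

text \<open>Action of (P^+ -o R^+) on k : y' -> y.\<close>
definition lres_act ::
  "('a,'b) mcat \<Rightarrow> ('c,'d) mcat \<Rightarrow> ('a \<Rightarrow> 'c) \<Rightarrow> ('b \<Rightarrow> 'd) \<Rightarrow> 'c \<Rightarrow> 'a \<Rightarrow> 'b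
   \<Rightarrow> (('a \<times> 'd) \<Rightarrow> 'b \<Rightarrow> 'b) \<Rightarrow> (('a \<times> 'd) \<Rightarrow> 'b \<Rightarrow> 'b)" where
  "lres_act D T to tm W P k \<theta> = (\<lambda>x a.
     if x \<in> wplus_ob D T to W \<and> a \<in> plus D tm P x
     then cmp D (tar D (idm D (fst x)) k) (\<theta> x a) else undefined)"

text \<open>(omega o- psi)(x) for omega = R^+, psi = Q^+: natural transformations
  Q^+ => R^+(x * (-)), represented extensionally.\<close>
definition rres_plus ::
  "('a,'b) mcat \<Rightarrow> ('c,'d) mcat \<Rightarrow> ('a \<Rightarrow> 'c) \<Rightarrow> ('b \<Rightarrow> 'd) \<Rightarrow> 'c \<Rightarrow> 'd \<Rightarrow> 'a \<Rightarrow> 'a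
   \<Rightarrow> ('a \<times> 'd) \<Rightarrow> (('a \<times> 'd) \<Rightarrow> 'b \<Rightarrow> 'b) set" where
  "rres_plus D T to tm W p R Q x = {\<theta>.
     (\<forall>y\<in>wplus_ob D T to W. \<forall>b\<in>plus D tm Q y. \<theta> y b \<in> plus D tm R (wtens D T p x y)) \<and>
     (\<forall>y\<in>wplus_ob D T to W. \<forall>y'\<in>wplus_ob D T to W. \<forall>k\<in>wplus_hom D T tm y' y. \<forall>b\<in>plus D tm Q y.
        \<theta> y' (cmp D k b) = cmp D (tar D (idm D (fst x)) k) (\<theta> y b)) \<and>
     (\<forall>y b. \<not> (y \<in> wplus_ob D T to W \<and> b \<in> plus D tm Q y) \<longrightarrow> \<theta> y b = undefined)}"

text \<open>Action of (R^+ o- Q^+) on h : x' -> x.\<close>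
definition rres_act ::
  "('a,'b) mcat \<Rightarrow> ('c,'d) mcat \<Rightarrow> ('a \<Rightarrow> 'c) \<Rightarrow> ('b \<Rightarrow> 'd) \<Rightarrow> 'c \<Rightarrow> 'a \<Rightarrow> 'b
   \<Rightarrow> (('a \<times> 'd) \<Rightarrow> 'b \<Rightarrow> 'b) \<Rightarrow> (('a \<times> 'd) \<Rightarrow> 'b \<Rightarrow> 'b)" where
  "rres_act D T to tm W Q h \<theta> = (\<lambda>y b.
     if y \<in> wplus_ob D T to W \<and> b \<in> plus D tm Q y
     then cmp D (tar D h (idm D (fst y))) (\<theta> y b) else undefined)"

definition nat_iso_lres ::
  "('a,'b) mcat \<Rightarrow> ('c,'d) mcat \<Rightarrow> ('a \<Rightarrow> 'c) \<Rightarrow> ('b \<Rightarrow> 'd) \<Rightarrow> 'c \<Rightarrow> 'd \<Rightarrow> 'a \<Rightarrow> 'a \<Rightarrow> 'a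
   \<Rightarrow> (('a \<times> 'd) \<Rightarrow> 'b \<Rightarrow> (('a \<times> 'd) \<Rightarrow> 'b \<Rightarrow> 'b)) \<Rightarrow> bool" where
  "nat_iso_lres D T to tm W p Y P R \<Phi> \<longleftrightarrow>
     (\<forall>y\<in>wplus_ob D T to W. bij_betw (\<Phi> y) (plus D tm Y y) (lres_plus D T to tm W p P R y)) \<and>
     (\<forall>y\<in>wplus_ob D T to W. \<forall>y'\<in>wplus_ob D T to W. \<forall>k\<in>wplus_hom D T tm y' y. \<forall>b\<in>plus D tm Y y.
        \<Phi> y' (cmp D k b) = lres_act D T to tm W P k (\<Phi> y b))"

definition nat_iso_rres ::
  "('a,'b) mcat \<Rightarrow> ('c,'d) mcat \<Rightarrow> ('a \<Rightarrow> 'c) \<Rightarrow> ('b \<Rightarrow> 'd) \<Rightarrow> 'c \<Rightarrow> 'd \<Rightarrow> 'a \<Rightarrow> 'a \<Rightarrow> 'a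
   \<Rightarrow> (('a \<times> 'd) \<Rightarrow> 'b \<Rightarrow> (('a \<times> 'd) \<Rightarrow> 'b \<Rightarrow> 'b)) \<Rightarrow> bool" where
  "nat_iso_rres D T to tm W p Y R Q \<Psi> \<longleftrightarrow>
     (\<forall>x\<in>wplus_ob D T to W. bij_betw (\<Psi> x) (plus D tm Y x) (rres_plus D T to tm W p R Q x)) \<and>
     (\<forall>x\<in>wplus_ob D T to W. \<forall>x'\<in>wplus_ob D T to W. \<forall>h\<in>wplus_hom D T tm x' x. \<forall>b\<in>plus D tm Y x.
        \<Psi> x' (cmp D h b) = rres_act D T to tm W Q h (\<Psi> x b))"

end

theory Submission
  imports Defs
begin

text \<open>Write y = (A, c) for an object of W^+, and lambda p : W \<rightarrow> t(P\R) for the currying of p.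
  Derivations of A \<Longrightarrow> Y over c into the pullback Y = (lambda p)^*(P\R) correspond to derivations
  of A \<Longrightarrow> P\R over c;lambda p. Transposing along the residual, they correspond to derivations of
  P \<otimes> A \<Longrightarrow> R over (id \<otimes> c);p, because t preserves the residual and p = (id \<otimes> lambda p);ev.
  By a Yoneda argument these are exactly the natural transformations P^+ \<Rightarrow> R^+((-) \<otimes> y), each
  being determined by its value on the generic element id_P over (P, id_W). Right residuals are
  left residuals for the reversed tensor.\<close>

lemma cmp_in_hom:
  "is_category C \<Longrightarrow> f \<in> hom C A B \<Longrightarrow> g \<in> hom C B E \<Longrightarrow> cmp C f g \<in> hom C A E"
  unfolding is_category_def hom_def by auto

lemma idm_in_hom: "is_category C \<Longrightarrow> A \<in> Ob C \<Longrightarrow> idm C A \<in> hom C A A"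
  unfolding is_category_def by auto

lemma hom_Ob: "is_category C \<Longrightarrow> f \<in> hom C A B \<Longrightarrow> A \<in> Ob C \<and> B \<in> Ob C"
  unfolding is_category_def hom_def by auto

lemma cmp_idm_left: "is_category C \<Longrightarrow> f \<in> hom C A B \<Longrightarrow> cmp C (idm C A) f = f"
  unfolding is_category_def hom_def by auto

lemma cmp_idm_right: "is_category C \<Longrightarrow> f \<in> hom C A B \<Longrightarrow> cmp C f (idm C B) = f"
  unfolding is_category_def hom_def by auto

lemma cmp_assoc:
  "is_category C \<Longrightarrow> f \<in> hom C A B \<Longrightarrow> g \<in> hom C B E \<Longrightarrow> h \<in> hom C E F \<Longrightarrow>
   cmp C (cmp C f g) h = cmp C f (cmp C g h)"
  unfolding is_category_def hom_def by auto

text \<open>The part of a monoidal structure the argument uses; unlike a monoidal structure it is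
  preserved by reversing the tensor.\<close>
definition tensor_category :: "('o,'m) mcat \<Rightarrow> bool" where
  "tensor_category C \<longleftrightarrow> is_category C \<and>
     (\<forall>f\<in>Ar C. \<forall>g\<in>Ar C. tar C f g \<in> hom C (tob C (src C f) (src C g)) (tob C (tgt C f) (tgt C g))) \<and>
     (\<forall>A\<in>Ob C. \<forall>B\<in>Ob C. tar C (idm C A) (idm C B) = idm C (tob C A B)) \<and>
     (\<forall>f\<in>Ar C. \<forall>f'\<in>Ar C. \<forall>g\<in>Ar C. \<forall>g'\<in>Ar C. tgt C f = src C f' \<and> tgt C g = src C g' \<longrightarrow>
        tar C (cmp C f f') (cmp C g g') = cmp C (tar C f g) (tar C f' g'))"

lemma monoidal_category_tensor_category:
  "is_monoidal_category C \<Longrightarrow> tensor_category C"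
  unfolding is_monoidal_category_def tensor_category_def by (simp add: Ball_def)

lemma tensor_category_is_category: "tensor_category C \<Longrightarrow> is_category C"
  unfolding tensor_category_def by blast

lemma tar_in_hom:
  "tensor_category C \<Longrightarrow> f \<in> hom C A B \<Longrightarrow> g \<in> hom C A' B' \<Longrightarrow>
   tar C f g \<in> hom C (tob C A A') (tob C B B')"
  unfolding tensor_category_def hom_def by auto

lemma tar_idm: "tensor_category C \<Longrightarrow> A \<in> Ob C \<Longrightarrow> B \<in> Ob C \<Longrightarrow>
   tar C (idm C A) (idm C B) = idm C (tob C A B)"
  unfolding tensor_category_def by blast

lemma tar_cmp:
  "tensor_category C \<Longrightarrow> f \<in> hom C A B \<Longrightarrow> f' \<in> hom C B E \<Longrightarrow>
   g \<in> hom C A' B' \<Longrightarrow> g' \<in> hom C B' E' \<Longrightarrow>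
   tar C (cmp C f f') (cmp C g g') = cmp C (tar C f g) (tar C f' g')"
  unfolding tensor_category_def hom_def by auto

lemma tar_factor_left:
  assumes C: "tensor_category C" and f: "f \<in> hom C A B" and g: "g \<in> hom C A' B'"
  shows "cmp C (tar C f (idm C A')) (tar C (idm C B) g) = tar C f g"
proof -
  have CC: "is_category C" using C by (rule tensor_category_is_category)
  have "A' \<in> Ob C" "B \<in> Ob C" using hom_Ob[OF CC f] hom_Ob[OF CC g] by auto
  then show ?thesis
    using tar_cmp[OF C f idm_in_hom[OF CC \<open>B \<in> Ob C\<close>] idm_in_hom[OF CC \<open>A' \<in> Ob C\<close>] g]
      cmp_idm_right[OF CC f] cmp_idm_left[OF CC g] by simp
qed

definition tensor_functor ::
  "('a,'b) mcat \<Rightarrow> ('c,'d) mcat \<Rightarrow> ('a \<Rightarrow> 'c) \<Rightarrow> ('b \<Rightarrow> 'd) \<Rightarrow> bool" where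
  "tensor_functor D T to tm \<longleftrightarrow> tensor_category D \<and> tensor_category T \<and>
     (\<forall>A\<in>Ob D. to A \<in> Ob T) \<and>
     (\<forall>f\<in>Ar D. tm f \<in> hom T (to (src D f)) (to (tgt D f))) \<and>
     (\<forall>A\<in>Ob D. tm (idm D A) = idm T (to A)) \<and>
     (\<forall>f\<in>Ar D. \<forall>g\<in>Ar D. tgt D f = src D g \<longrightarrow> tm (cmp D f g) = cmp T (tm f) (tm g)) \<and>
     (\<forall>A\<in>Ob D. \<forall>B\<in>Ob D. to (tob D A B) = tob T (to A) (to B)) \<and>
     (\<forall>f\<in>Ar D. \<forall>g\<in>Ar D. tm (tar D f g) = tar T (tm f) (tm g))"

lemma logical_refinement_system_tensor_functor:
  "logical_refinement_system D T to tm \<Longrightarrow> tensor_functor D T to tm"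
  unfolding logical_refinement_system_def strict_monoidal_functor_def tensor_functor_def
  by (simp add: monoidal_category_tensor_category)

lemma tensor_functor_domain: "tensor_functor D T to tm \<Longrightarrow> tensor_category D"
  and tensor_functor_codomain: "tensor_functor D T to tm \<Longrightarrow> tensor_category T"
  unfolding tensor_functor_def by blast+

lemma to_in_Ob: "tensor_functor D T to tm \<Longrightarrow> A \<in> Ob D \<Longrightarrow> to A \<in> Ob T"
  unfolding tensor_functor_def by blast

lemma tm_in_hom: "tensor_functor D T to tm \<Longrightarrow> f \<in> hom D A B \<Longrightarrow> tm f \<in> hom T (to A) (to B)"
  unfolding tensor_functor_def hom_def by auto

lemma tm_idm: "tensor_functor D T to tm \<Longrightarrow> A \<in> Ob D \<Longrightarrow> tm (idm D A) = idm T (to A)"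
  unfolding tensor_functor_def by blast

lemma tm_cmp: "tensor_functor D T to tm \<Longrightarrow> f \<in> hom D A B \<Longrightarrow> g \<in> hom D B E \<Longrightarrow>
   tm (cmp D f g) = cmp T (tm f) (tm g)"
  unfolding tensor_functor_def hom_def by auto

lemma tm_tar: "tensor_functor D T to tm \<Longrightarrow> f \<in> hom D A B \<Longrightarrow> g \<in> hom D A' B' \<Longrightarrow>
   tm (tar D f g) = tar T (tm f) (tm g)"
  unfolding tensor_functor_def hom_def by auto

lemma to_tob: "tensor_functor D T to tm \<Longrightarrow> A \<in> Ob D \<Longrightarrow> B \<in> Ob D \<Longrightarrow>
   to (tob D A B) = tob T (to A) (to B)"
  unfolding tensor_functor_def by blast

lemma derivs_cmp:
  "tensor_functor D T to tm \<Longrightarrow> \<alpha> \<in> derivs D tm P c Q \<Longrightarrow> \<beta> \<in> derivs D tm Q d R \<Longrightarrow>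
   cmp D \<alpha> \<beta> \<in> derivs D tm P (cmp T c d) R"
  unfolding derivs_def
  using cmp_in_hom[OF tensor_category_is_category[OF tensor_functor_domain]] tm_cmp by fastforce

lemma plus_Pair: "plus D tm Q (A, c) = derivs D tm A c Q"
  unfolding plus_def by simp

lemma tm_left_whisker:
  assumes F: "tensor_functor D T to tm" and P: "P \<in> Ob D"
    and g: "g \<in> hom D A X" and ev: "ev \<in> hom D (tob D P X) R"
  shows "tm (cmp D (tar D (idm D P) g) ev) = cmp T (tar T (idm T (to P)) (tm g)) (tm ev)"
proof -
  have CD: "is_category D" using tensor_category_is_category[OF tensor_functor_domain[OF F]] .
  have idP: "idm D P \<in> hom D P P" using idm_in_hom[OF CD P] .
  show ?thesis
    using tm_cmp[OF F tar_in_hom[OF tensor_functor_domain[OF F] idP g] ev]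
      tm_tar[OF F idP g] tm_idm[OF F P] by simp
qed

lemma left_res_ex:
  "is_left_res C P R X ev \<Longrightarrow> Y \<in> Ob C \<Longrightarrow> f \<in> hom C (tob C P Y) R \<Longrightarrow>
   \<exists>g. g \<in> hom C Y X \<and> f = cmp C (tar C (idm C P) g) ev"
  unfolding is_left_res_def by metis

lemma left_res_uniq:
  "is_left_res C P R X ev \<Longrightarrow> Y \<in> Ob C \<Longrightarrow> g \<in> hom C Y X \<Longrightarrow> g' \<in> hom C Y X \<Longrightarrow>
   cmp C (tar C (idm C P) g) ev \<in> hom C (tob C P Y) R \<Longrightarrow>
   cmp C (tar C (idm C P) g) ev = cmp C (tar C (idm C P) g') ev \<Longrightarrow> g = g'"
  unfolding is_left_res_def by metis

lemma left_res_transpose_bij: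
  assumes F: "tensor_functor D T to tm"
    and resD: "is_left_res D P R X ev" and resT: "is_left_res T (to P) (to R) (to X) (tm ev)"
    and A: "A \<in> Ob D" and k: "k \<in> hom T (to A) (to X)"
  shows "bij_betw (\<lambda>g. cmp D (tar D (idm D P) g) ev) (derivs D tm A k X)
           (derivs D tm (tob D P A) (cmp T (tar T (idm T (to P)) k) (tm ev)) R)"
proof (rule bij_betwI')
  have MD: "tensor_category D" and MT: "tensor_category T"
    using F by (auto dest: tensor_functor_domain tensor_functor_codomain)
  have CD: "is_category D" and CT: "is_category T" using MD MT tensor_category_is_category by auto
  have P: "P \<in> Ob D" and ev: "ev \<in> hom D (tob D P X) R"
    using resD unfolding is_left_res_def by auto
  have idP: "idm D P \<in> hom D P P" using idm_in_hom[OF CD P] .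
  have tev: "tm ev \<in> hom T (tob T (to P) (to X)) (to R)"
    using tm_in_hom[OF F ev] to_tob[OF F P] resD unfolding is_left_res_def by auto
  have transpose_hom: "cmp D (tar D (idm D P) g) ev \<in> hom D (tob D P A) R" if "g \<in> hom D A X" for g
    using cmp_in_hom[OF CD tar_in_hom[OF MD idP that] ev] .
  show "(cmp D (tar D (idm D P) g) ev = cmp D (tar D (idm D P) g') ev) = (g = g')"
    if "g \<in> derivs D tm A k X" "g' \<in> derivs D tm A k X" for g g'
    using that left_res_uniq[OF resD A, of g g'] transpose_hom unfolding derivs_def by auto
  show "cmp D (tar D (idm D P) g) ev \<in> derivs D tm (tob D P A) (cmp T (tar T (idm T (to P)) k) (tm ev)) R"
    if "g \<in> derivs D tm A k X" for g
    using that transpose_hom tm_left_whisker[OF F P _ ev] unfolding derivs_def by auto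
  show "\<exists>g\<in>derivs D tm A k X. f = cmp D (tar D (idm D P) g) ev"
    if f: "f \<in> derivs D tm (tob D P A) (cmp T (tar T (idm T (to P)) k) (tm ev)) R" for f
  proof -
    obtain g where g: "g \<in> hom D A X" and fg: "f = cmp D (tar D (idm D P) g) ev"
      using left_res_ex[OF resD A] f unfolding derivs_def by blast
    have tg: "tm g \<in> hom T (to A) (to X)" using tm_in_hom[OF F g] .
    have idtP: "idm T (to P) \<in> hom T (to P) (to P)" using idm_in_hom[OF CT to_in_Ob[OF F P]] .
    have "cmp T (tar T (idm T (to P)) (tm g)) (tm ev) = cmp T (tar T (idm T (to P)) k) (tm ev)"
      using f fg tm_left_whisker[OF F P g ev] unfolding derivs_def by simp
    then have "tm g = k"
      using left_res_uniq[OF resT to_in_Ob[OF F A] tg k]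
        cmp_in_hom[OF CT tar_in_hom[OF MT idtP tg] tev] by blast
    then show ?thesis using g fg unfolding derivs_def by auto
  qed
qed

lemma left_curry_cmp:
  assumes T: "tensor_category T" and lc: "left_curry T W p X ev lp"
    and ev: "ev \<in> hom T (tob T W X) V" and c: "c \<in> hom T A W"
  shows "cmp T (tar T (idm T W) (cmp T c lp)) ev = cmp T (tar T (idm T W) c) p"
proof -
  have CT: "is_category T" using T by (rule tensor_category_is_category)
  have lp: "lp \<in> hom T W X" and p: "p = cmp T (tar T (idm T W) lp) ev"
    using lc unfolding left_curry_def by auto
  have idW: "idm T W \<in> hom T W W" using idm_in_hom[OF CT] hom_Ob[OF CT lp] by blast
  have "tar T (idm T W) (cmp T c lp) = cmp T (tar T (idm T W) c) (tar T (idm T W) lp)"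
    using tar_cmp[OF T idW idW c lp] cmp_idm_left[OF CT idW] by simp
  then show ?thesis
    using cmp_assoc[OF CT tar_in_hom[OF T idW c] tar_in_hom[OF T idW lp] ev] p by simp
qed

section \<open>Yoneda for the left residual of positive presheaves\<close>

definition yoneda_lres ::
  "('a,'b) mcat \<Rightarrow> ('c,'d) mcat \<Rightarrow> ('a \<Rightarrow> 'c) \<Rightarrow> ('b \<Rightarrow> 'd) \<Rightarrow> 'c \<Rightarrow> 'a \<Rightarrow> 'a \<Rightarrow> 'b
   \<Rightarrow> (('a \<times> 'd) \<Rightarrow> 'b \<Rightarrow> 'b)" where
  "yoneda_lres D T to tm W P A f = (\<lambda>x a.
     if x \<in> wplus_ob D T to W \<and> a \<in> plus D tm P x then cmp D (tar D a (idm D A)) f else undefined)"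

lemma generic_in_wplus_ob:
  "tensor_functor D T to tm \<Longrightarrow> refines D to P W \<Longrightarrow> (P, idm T W) \<in> wplus_ob D T to W"
  unfolding wplus_ob_def refines_def
  by (auto intro: idm_in_hom tensor_category_is_category tensor_functor_codomain to_in_Ob)

lemma idm_in_plus_generic:
  "tensor_functor D T to tm \<Longrightarrow> refines D to P W \<Longrightarrow> idm D P \<in> plus D tm P (P, idm T W)"
  unfolding plus_Pair derivs_def refines_def
  by (auto intro: idm_in_hom tensor_category_is_category tensor_functor_domain tm_idm)

lemma lres_plus_eq_generic:
  assumes F: "tensor_functor D T to tm" and Pr: "refines D to P W"
    and \<theta>: "\<theta> \<in> lres_plus D T to tm W p P R y"
    and x: "x \<in> wplus_ob D T to W" and a: "a \<in> plus D tm P x"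
  shows "\<theta> x a = cmp D (tar D a (idm D (fst y))) (\<theta> (P, idm T W) (idm D P))"
proof -
  have CD: "is_category D" and CT: "is_category T"
    using F by (auto dest: tensor_functor_domain tensor_functor_codomain tensor_category_is_category)
  obtain B d where xBd: "x = (B, d)" and d: "d \<in> hom T (to B) W"
    using x unfolding wplus_ob_def by auto
  have ah: "a \<in> hom D B P" "tm a = d" using a unfolding xBd plus_Pair derivs_def by auto
  have "a \<in> wplus_hom D T tm x (P, idm T W)"
    unfolding wplus_hom_def xBd using ah cmp_idm_right[OF CT d] by simp
  then have "\<theta> x (cmp D a (idm D P)) = cmp D (tar D a (idm D (fst y))) (\<theta> (P, idm T W) (idm D P))"
    using \<theta> x generic_in_wplus_ob[OF F Pr] idm_in_plus_generic[OF F Pr]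
    unfolding lres_plus_def by blast
  then show ?thesis using cmp_idm_right[OF CD ah(1)] by simp
qed

lemma lres_plus_yoneda_bij:
  assumes F: "tensor_functor D T to tm" and Pr: "refines D to P W"
    and A: "A \<in> Ob D" and c: "c \<in> hom T (to A) W" and p: "p \<in> hom T (tob T W W) W"
  shows "bij_betw (yoneda_lres D T to tm W P A)
           (derivs D tm (tob D P A) (cmp T (tar T (idm T W) c) p) R)
           (lres_plus D T to tm W p P R (A, c))"
proof (rule bij_betwI')
  have MD: "tensor_category D" and MT: "tensor_category T"
    using F by (auto dest: tensor_functor_domain tensor_functor_codomain)
  have CD: "is_category D" and CT: "is_category T" using MD MT tensor_category_is_category by auto
  have P: "P \<in> Ob D" "to P = W" using Pr unfolding refines_def by auto
  have idA: "idm D A \<in> hom D A A" using idm_in_hom[OF CD A] .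
  have idW: "idm T W \<in> hom T W W" using idm_in_hom[OF CT] to_in_Ob[OF F P(1)] P(2) by blast
  note x0 = generic_in_wplus_ob[OF F Pr] and a0 = idm_in_plus_generic[OF F Pr]
  have at_generic: "yoneda_lres D T to tm W P A f (P, idm T W) (idm D P) = f"
    if "f \<in> hom D (tob D P A) R" for f
    unfolding yoneda_lres_def using x0 a0 tar_idm[OF MD P(1) A] cmp_idm_left[OF CD that] by simp
  show "(yoneda_lres D T to tm W P A f = yoneda_lres D T to tm W P A f') = (f = f')"
    if "f \<in> derivs D tm (tob D P A) (cmp T (tar T (idm T W) c) p) R"
      and "f' \<in> derivs D tm (tob D P A) (cmp T (tar T (idm T W) c) p) R" for f f'
    by (metis (no_types, lifting) that at_generic derivs_def mem_Collect_eq)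
  show "yoneda_lres D T to tm W P A f \<in> lres_plus D T to tm W p P R (A, c)"
    if f: "f \<in> derivs D tm (tob D P A) (cmp T (tar T (idm T W) c) p) R" for f
    unfolding lres_plus_def
  proof (intro CollectI conjI ballI allI impI)
    have fh: "f \<in> hom D (tob D P A) R" "tm f = cmp T (tar T (idm T W) c) p"
      using f unfolding derivs_def by auto
    fix x a assume x: "x \<in> wplus_ob D T to W" and a: "a \<in> plus D tm P x"
    obtain B d where xBd: "x = (B, d)" and d: "d \<in> hom T (to B) W"
      using x unfolding wplus_ob_def by auto
    have ah: "a \<in> hom D B P" "tm a = d" using a unfolding xBd plus_Pair derivs_def by auto
    have idtA: "idm T (to A) \<in> hom T (to A) (to A)" using idm_in_hom[OF CT to_in_Ob[OF F A]] .
    have "tm (cmp D (tar D a (idm D A)) f)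
        = cmp T (tar T d (idm T (to A))) (cmp T (tar T (idm T W) c) p)"
      using tm_cmp[OF F tar_in_hom[OF MD ah(1) idA] fh(1)] tm_tar[OF F ah(1) idA] tm_idm[OF F A] ah fh
      by simp
    also have "\<dots> = cmp T (tar T d c) p"
      using cmp_assoc[OF CT tar_in_hom[OF MT d idtA] tar_in_hom[OF MT idW c] p]
        tar_factor_left[OF MT d c] by simp
    finally show "yoneda_lres D T to tm W P A f x a \<in> plus D tm R (wtens D T p x (A, c))"
      using x a cmp_in_hom[OF CD tar_in_hom[OF MD ah(1) idA] fh(1)]
      unfolding yoneda_lres_def wtens_def xBd plus_Pair derivs_def by simp
  next
    have fh: "f \<in> hom D (tob D P A) R" using f unfolding derivs_def by auto
    fix x x' h a assume x: "x \<in> wplus_ob D T to W" and x': "x' \<in> wplus_ob D T to W"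
      and h: "h \<in> wplus_hom D T tm x' x" and a: "a \<in> plus D tm P x"
    obtain B d where xBd: "x = (B, d)" using x unfolding wplus_ob_def by auto
    obtain B' d' where xBd': "x' = (B', d')" using x' unfolding wplus_ob_def by auto
    have ah: "a \<in> derivs D tm B d P" using a xBd plus_Pair by metis
    have hh: "h \<in> derivs D tm B' (tm h) B" and hom_h: "h \<in> hom D B' B"
      using h unfolding xBd xBd' wplus_hom_def derivs_def by auto
    have ha: "cmp D h a \<in> plus D tm P x'"
      using derivs_cmp[OF F hh ah] h unfolding xBd xBd' plus_Pair wplus_hom_def by auto
    have ah': "a \<in> hom D B P" using ah unfolding derivs_def by auto
    have "tar D (cmp D h a) (idm D A) = cmp D (tar D h (idm D A)) (tar D a (idm D A))"
      using tar_cmp[OF MD hom_h ah' idA idA] cmp_idm_left[OF CD idA] by simp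
    then show "yoneda_lres D T to tm W P A f x' (cmp D h a)
        = cmp D (tar D h (idm D (fst (A, c)))) (yoneda_lres D T to tm W P A f x a)"
      unfolding yoneda_lres_def using x x' a ha
        cmp_assoc[OF CD tar_in_hom[OF MD hom_h idA] tar_in_hom[OF MD ah' idA] fh] by simp
  next
    fix x a assume "\<not> (x \<in> wplus_ob D T to W \<and> a \<in> plus D tm P x)"
    then show "yoneda_lres D T to tm W P A f x a = undefined" unfolding yoneda_lres_def by auto
  qed
  show "\<exists>f\<in>derivs D tm (tob D P A) (cmp T (tar T (idm T W) c) p) R. \<theta> = yoneda_lres D T to tm W P A f"
    if \<theta>: "\<theta> \<in> lres_plus D T to tm W p P R (A, c)" for \<theta>
  proof
    show "\<theta> (P, idm T W) (idm D P) \<in> derivs D tm (tob D P A) (cmp T (tar T (idm T W) c) p) R"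
      using \<theta> x0 a0 unfolding lres_plus_def wtens_def plus_def by auto
    then show "\<theta> = yoneda_lres D T to tm W P A (\<theta> (P, idm T W) (idm D P))"
      using \<theta> lres_plus_eq_generic[OF F Pr \<theta>] unfolding lres_plus_def yoneda_lres_def
      by (intro ext) auto
  qed
qed

lemma yoneda_lres_natural:
  assumes MD: "tensor_category D" and k: "k \<in> hom D A' A" and g: "g \<in> hom D A X"
    and ev: "ev \<in> hom D (tob D P X) R"
  shows "yoneda_lres D T to tm W P A' (cmp D (tar D (idm D P) (cmp D k g)) ev)
       = lres_act D T to tm W P k (yoneda_lres D T to tm W P A (cmp D (tar D (idm D P) g) ev))"
proof (intro ext)
  have CD: "is_category D" using MD by (rule tensor_category_is_category)
  have kg: "cmp D k g \<in> hom D A' X" using cmp_in_hom[OF CD k g] .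
  fix x a
  show "yoneda_lres D T to tm W P A' (cmp D (tar D (idm D P) (cmp D k g)) ev) x a
      = lres_act D T to tm W P k (yoneda_lres D T to tm W P A (cmp D (tar D (idm D P) g) ev)) x a"
  proof (cases "x \<in> wplus_ob D T to W \<and> a \<in> plus D tm P x")
    case True
    then obtain B d where xBd: "x = (B, d)" and a: "a \<in> hom D B P"
      unfolding wplus_ob_def plus_def derivs_def by auto
    have idB: "idm D B \<in> hom D B B" using idm_in_hom[OF CD] hom_Ob[OF CD a] by blast
    have idP: "idm D P \<in> hom D P P" using idm_in_hom[OF CD] hom_Ob[OF CD a] by blast
    have idA: "idm D A \<in> hom D A A" using idm_in_hom[OF CD] hom_Ob[OF CD k] by blast
    have idA': "idm D A' \<in> hom D A' A'" using idm_in_hom[OF CD] hom_Ob[OF CD k] by blast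
    have "cmp D (tar D a (idm D A')) (cmp D (tar D (idm D P) (cmp D k g)) ev)
        = cmp D (tar D a (cmp D k g)) ev"
      using cmp_assoc[OF CD tar_in_hom[OF MD a idA'] tar_in_hom[OF MD idP kg] ev]
        tar_factor_left[OF MD a kg] by simp
    also have "\<dots> = cmp D (cmp D (tar D (idm D B) k) (tar D a g)) ev"
      using tar_cmp[OF MD idB a k g] cmp_idm_left[OF CD a] by simp
    also have "\<dots> = cmp D (tar D (idm D B) k) (cmp D (tar D a (idm D A)) (cmp D (tar D (idm D P) g) ev))"
      using cmp_assoc[OF CD tar_in_hom[OF MD idB k] tar_in_hom[OF MD a g] ev]
        cmp_assoc[OF CD tar_in_hom[OF MD a idA] tar_in_hom[OF MD idP g] ev]
        tar_factor_left[OF MD a g] by simp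
    finally show ?thesis using True unfolding yoneda_lres_def lres_act_def xBd by simp
  next
    case False
    then show ?thesis unfolding yoneda_lres_def lres_act_def by auto
  qed
qed

theorem positive_left_residual_iso:
  assumes F: "tensor_functor D T to tm"
    and Pr: "refines D to P W" and Rr: "refines D to R W"
    and resD: "is_left_res D P R X ev" and resT: "is_left_res T (to P) (to R) (to X) (tm ev)"
    and lc: "left_curry T W p (to X) (tm ev) lp" and pb: "is_pullback D T to tm lp X Y lam"
  shows "nat_iso_lres D T to tm W p Y P R
           (\<lambda>y b. yoneda_lres D T to tm W P (fst y) (cmp D (tar D (idm D P) (cmp D b lam)) ev))"
    (is "nat_iso_lres D T to tm W p Y P R ?\<Phi>")
proof -
  have MD: "tensor_category D" and MT: "tensor_category T"
    using F by (auto dest: tensor_functor_domain tensor_functor_codomain)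
  have CD: "is_category D" and CT: "is_category T" using MD MT tensor_category_is_category by auto
  have P: "P \<in> Ob D" "to P = W" and toR: "to R = W" using Pr Rr unfolding refines_def by auto
  have X: "X \<in> Ob D" and ev: "ev \<in> hom D (tob D P X) R"
    using resD unfolding is_left_res_def by auto
  have lp: "lp \<in> hom T W (to X)" and p: "p = cmp T (tar T (idm T W) lp) (tm ev)"
    using lc unfolding left_curry_def by auto
  have lam: "lam \<in> hom D Y X" "tm lam = lp"
    and pullback_bij: "\<And>A c. A \<in> Ob D \<Longrightarrow> c \<in> hom T (to A) W \<Longrightarrow>
        bij_betw (\<lambda>b. cmp D b lam) (derivs D tm A c Y) (derivs D tm A (cmp T c lp) X)"
    using pb lp unfolding is_pullback_def derivs_def hom_def by auto
  have tev: "tm ev \<in> hom T (tob T W (to X)) W"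
    using tm_in_hom[OF F ev] to_tob[OF F P(1) X] P toR by simp
  have idW: "idm T W \<in> hom T W W" using idm_in_hom[OF CT] to_in_Ob[OF F P(1)] P by blast
  have p_hom: "p \<in> hom T (tob T W W) W"
    using cmp_in_hom[OF CT tar_in_hom[OF MT idW lp] tev] p by simp
  have "bij_betw (?\<Phi> y) (plus D tm Y y) (lres_plus D T to tm W p P R y)"
    if y_ob: "y \<in> wplus_ob D T to W" for y
  proof -
    obtain A c where y: "y = (A, c)" and A: "A \<in> Ob D" and c: "c \<in> hom T (to A) W"
      using y_ob unfolding wplus_ob_def by auto
    have "bij_betw (\<lambda>g. cmp D (tar D (idm D P) g) ev) (derivs D tm A (cmp T c lp) X)
            (derivs D tm (tob D P A) (cmp T (tar T (idm T W) c) p) R)"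
      using left_res_transpose_bij[OF F resD resT A cmp_in_hom[OF CT c lp]]
        left_curry_cmp[OF MT lc tev c] P(2) by simp
    from bij_betw_trans[OF bij_betw_trans[OF pullback_bij[OF A c] this]
        lres_plus_yoneda_bij[OF F Pr A c p_hom]]
    show ?thesis unfolding y plus_Pair by (simp add: comp_def)
  qed
  moreover have "?\<Phi> y' (cmp D k b) = lres_act D T to tm W P k (?\<Phi> y b)"
    if "y \<in> wplus_ob D T to W" "y' \<in> wplus_ob D T to W" "k \<in> wplus_hom D T tm y' y"
      "b \<in> plus D tm Y y" for y y' k b
  proof -
    have k: "k \<in> hom D (fst y') (fst y)" using that(3) unfolding wplus_hom_def by auto
    have b: "b \<in> hom D (fst y) Y" using that(4) unfolding plus_def derivs_def by auto
    show ?thesis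
      using yoneda_lres_natural[OF MD k cmp_in_hom[OF CD b lam(1)] ev]
        cmp_assoc[OF CD k b lam(1)] by simp
  qed
  ultimately show ?thesis unfolding nat_iso_lres_def by blast
qed

section \<open>Preservation of right residuals, by reversing the tensor\<close>

definition reverse_tensor :: "('o,'m) mcat \<Rightarrow> ('o,'m) mcat" where
  "reverse_tensor C = C\<lparr>tob := \<lambda>A B. tob C B A, tar := \<lambda>f g. tar C g f\<rparr>"

lemma reverse_tensor_simps [simp]:
  "Ob (reverse_tensor C) = Ob C" "Ar (reverse_tensor C) = Ar C"
  "src (reverse_tensor C) = src C" "tgt (reverse_tensor C) = tgt C"
  "idm (reverse_tensor C) = idm C" "cmp (reverse_tensor C) = cmp C"
  "tob (reverse_tensor C) A B = tob C B A" "tar (reverse_tensor C) f g = tar C g f"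
  unfolding reverse_tensor_def by simp_all

lemma hom_reverse_tensor [simp]: "hom (reverse_tensor C) = hom C"
  unfolding hom_def by simp

lemma is_category_reverse_tensor [simp]: "is_category (reverse_tensor C) = is_category C"
  unfolding is_category_def by simp

lemma tensor_category_reverse_tensor:
  "tensor_category C \<Longrightarrow> tensor_category (reverse_tensor C)"
  unfolding tensor_category_def by simp

lemma tensor_functor_reverse_tensor:
  "tensor_functor D T to tm \<Longrightarrow> tensor_functor (reverse_tensor D) (reverse_tensor T) to tm"
  unfolding tensor_functor_def by (simp add: tensor_category_reverse_tensor)

lemma refines_reverse_tensor [simp]: "refines (reverse_tensor D) = refines D"
  unfolding refines_def by (simp add: fun_eq_iff)

lemma is_pullback_reverse_tensor [simp]:
  "is_pullback (reverse_tensor D) (reverse_tensor T) = is_pullback D T"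
  unfolding is_pullback_def refines_def derivs_def by (simp add: fun_eq_iff)

lemma is_right_res_eq_left_res_reverse:
  "is_right_res C R Q X ev = is_left_res (reverse_tensor C) Q R X ev"
  unfolding is_right_res_def is_left_res_def by auto

lemma right_curry_eq_left_curry_reverse:
  "right_curry T W p X ev rp = left_curry (reverse_tensor T) W p X ev rp"
  unfolding right_curry_def left_curry_def by simp

lemma derivs_reverse_tensor [simp]: "derivs (reverse_tensor D) = derivs D"
  unfolding derivs_def by (simp add: fun_eq_iff)

lemma plus_reverse_tensor [simp]: "plus (reverse_tensor D) = plus D"
  unfolding plus_def by (simp add: fun_eq_iff)

lemma wplus_ob_reverse_tensor [simp]: "wplus_ob (reverse_tensor D) (reverse_tensor T) = wplus_ob D T"
  unfolding wplus_ob_def by (simp add: fun_eq_iff)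

lemma wplus_hom_reverse_tensor [simp]:
  "wplus_hom (reverse_tensor D) (reverse_tensor T) = wplus_hom D T"
  unfolding wplus_hom_def by (simp add: fun_eq_iff)

lemma wtens_reverse_tensor [simp]:
  "wtens (reverse_tensor D) (reverse_tensor T) p x y = wtens D T p y x"
  unfolding wtens_def by simp

lemma lres_plus_reverse_tensor [simp]:
  "lres_plus (reverse_tensor D) (reverse_tensor T) to tm W p Q R x = rres_plus D T to tm W p R Q x"
  unfolding lres_plus_def rres_plus_def by simp

lemma lres_act_reverse_tensor [simp]:
  "lres_act (reverse_tensor D) (reverse_tensor T) to tm W Q h = rres_act D T to tm W Q h"
  unfolding lres_act_def rres_act_def by (simp add: fun_eq_iff)

lemma nat_iso_rres_eq_lres_reverse:
  "nat_iso_rres D T to tm W p Y R Q \<Psi> =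
   nat_iso_lres (reverse_tensor D) (reverse_tensor T) to tm W p Y Q R \<Psi>"
  unfolding nat_iso_rres_def nat_iso_lres_def by simp

theorem positive_right_residual_iso:
  assumes F: "tensor_functor D T to tm"
    and "refines D to R W" and "refines D to Q W"
    and "is_right_res D R Q X ev" and "is_right_res T (to R) (to Q) (to X) (tm ev)"
    and "right_curry T W p (to X) (tm ev) rp" and "is_pullback D T to tm rp X Y lam"
  shows "\<exists>\<Psi>. nat_iso_rres D T to tm W p Y R Q \<Psi>"
  using positive_left_residual_iso[OF tensor_functor_reverse_tensor[OF F], of Q W R X ev p rp Y lam]
    assms(2-)
  unfolding nat_iso_rres_eq_lres_reverse is_right_res_eq_left_res_reverse
    right_curry_eq_left_curry_reverse
  by auto

theorem proposition3p23:
  fixes D :: "('a,'b) mcat" and T :: "('c,'d) mcat"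
    and to :: "'a \<Rightarrow> 'c" and tm :: "'b \<Rightarrow> 'd"
    and W :: 'c and p e :: 'd
  assumes "logical_refinement_system D T to tm"
    and "enough_res_pb D T to tm W p"
    and "is_monoid T W p e"
  shows "(\<forall>P R X ev lp Y lam.
            refines D to P W \<and> refines D to R W \<and> is_left_res D P R X ev \<and>
            left_curry T W p (to X) (tm ev) lp \<and> is_pullback D T to tm lp X Y lam
            \<longrightarrow> (\<exists>\<Phi>. nat_iso_lres D T to tm W p Y P R \<Phi>)) \<and>
         (\<forall>R Q X ev rp Y lam.
            refines D to R W \<and> refines D to Q W \<and> is_right_res D R Q X ev \<and>
            right_curry T W p (to X) (tm ev) rp \<and> is_pullback D T to tm rp X Y lam
            \<longrightarrow> (\<exists>\<Psi>. nat_iso_rres D T to tm W p Y R Q \<Psi>))"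
proof -
  have F: "tensor_functor D T to tm"
    using assms(1) by (rule logical_refinement_system_tensor_functor)
  have left_preserved: "is_left_res T (to P) (to R) (to X) (tm ev)"
    if "is_left_res D P R X ev" for P R X ev
    using assms(1) that unfolding logical_refinement_system_def by blast
  have right_preserved: "is_right_res T (to R) (to Q) (to X) (tm ev)"
    if "is_right_res D R Q X ev" for R Q X ev
    using assms(1) that unfolding logical_refinement_system_def by blast
  show ?thesis
    using positive_left_residual_iso[OF F _ _ _ left_preserved]
      positive_right_residual_iso[OF F _ _ _ right_preserved] by blast
qed

end
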